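(* Let $S=(G,P,\Lambda,I)$ be a completely simple semigroup with non-singular sandwich matrix $P$, and let $\mathbf 1=(1,1_G,1)$. Then every algebraic set $Y\subseteq S^n$ over $S$ (in the language $\mathcal{L}_S$) is the solution set of a system of the form $\{t_i(X)=\mathbf{1}\mid i\in\mathcal{I}\}$, where $X=(x_1,\dots,x_n)$ and each $t_i$ is an $\mathcal{L}_S$-term.
   Context: Rees representation: a completely simple semigroup $S=(G,P,\Lambda,I)$ is given by a group $G$, index sets $\Lambda,I$ (each containing an element $1$), and a matrix $P=(p_{i\lambda})_{i\in I,\lambda\in\Lambda}$ over $G$ normalised so that $p_{1\lambda}=p_{i1}=1_G$; elements are triples $(\lambda,g,i)$ with product $(\lambda,g,i)(\mu,h,j)=(\lambda,gp_{i\mu}h,j)$ and inversion $(\lambda,g,i)^{-1}=(\lambda,p_{i\lambda}^{-1}g^{-1}p_{i\lambda}^{-1},i)$. $P$ is non-singular if it has no two equal rows and no two equal columns. The language $\mathcal{L}_S$ is $\{\cdot,{}^{-1}\}$ plus a constant for each element of $S$; terms are built from variables and constants using products and ${}^{-1}$; an algebraic set is the solution set of a system (set) of equations $t(X)=s(X)$ between terms. *)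

theory Defs
  imports "HOL-Algebra.Group"
begin

text \<open>The distinguished index elements "1" are l1 in Lam and i1 in I.\<close>

definition rees_carrier :: "('g,'b) monoid_scheme \<Rightarrow> 'l set \<Rightarrow> 'i set \<Rightarrow> ('l \<times> 'g \<times> 'i) set" where
  "rees_carrier G Lam I = Lam \<times> carrier G \<times> I"

definition rees_mult :: "('g,'b) monoid_scheme \<Rightarrow> ('i \<Rightarrow> 'l \<Rightarrow> 'g)
    \<Rightarrow> ('l \<times> 'g \<times> 'i) \<Rightarrow> ('l \<times> 'g \<times> 'i) \<Rightarrow> ('l \<times> 'g \<times> 'i)" where
  "rees_mult G P x y = (case x of (l, g, i) \<Rightarrow> case y of (m, h, j) \<Rightarrow>
      (l, g \<otimes>\<^bsub>G\<^esub> P i m \<otimes>\<^bsub>G\<^esub> h, j))"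

definition rees_inv :: "('g,'b) monoid_scheme \<Rightarrow> ('i \<Rightarrow> 'l \<Rightarrow> 'g)
    \<Rightarrow> ('l \<times> 'g \<times> 'i) \<Rightarrow> ('l \<times> 'g \<times> 'i)" where
  "rees_inv G P x = (case x of (l, g, i) \<Rightarrow>
      (l, inv\<^bsub>G\<^esub> (P i l) \<otimes>\<^bsub>G\<^esub> inv\<^bsub>G\<^esub> g \<otimes>\<^bsub>G\<^esub> inv\<^bsub>G\<^esub> (P i l), i))"

definition rees_data :: "('g,'b) monoid_scheme \<Rightarrow> ('i \<Rightarrow> 'l \<Rightarrow> 'g) \<Rightarrow> 'l set \<Rightarrow> 'i set
    \<Rightarrow> 'l \<Rightarrow> 'i \<Rightarrow> bool" where
  "rees_data G P Lam I l1 i1 \<longleftrightarrow> group G \<and> l1 \<in> Lam \<and> i1 \<in> I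
     \<and> (\<forall>i\<in>I. \<forall>l\<in>Lam. P i l \<in> carrier G)
     \<and> (\<forall>l\<in>Lam. P i1 l = \<one>\<^bsub>G\<^esub>) \<and> (\<forall>i\<in>I. P i l1 = \<one>\<^bsub>G\<^esub>)"

definition nonsingular :: "('i \<Rightarrow> 'l \<Rightarrow> 'g) \<Rightarrow> 'l set \<Rightarrow> 'i set \<Rightarrow> bool" where
  "nonsingular P Lam I \<longleftrightarrow>
     (\<forall>i\<in>I. \<forall>j\<in>I. i \<noteq> j \<longrightarrow> (\<exists>l\<in>Lam. P i l \<noteq> P j l))
   \<and> (\<forall>l\<in>Lam. \<forall>m\<in>Lam. l \<noteq> m \<longrightarrow> (\<exists>i\<in>I. P i l \<noteq> P i m))"

datatype 'c trm = Var nat | Cst 'c | Mul "'c trm" "'c trm" | Inv "'c trm"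

fun trm_vars :: "'c trm \<Rightarrow> nat set" where
  "trm_vars (Var k) = {k}"
| "trm_vars (Cst c) = {}"
| "trm_vars (Mul t s) = trm_vars t \<union> trm_vars s"
| "trm_vars (Inv t) = trm_vars t"

fun trm_consts :: "'c trm \<Rightarrow> 'c set" where
  "trm_consts (Var k) = {}"
| "trm_consts (Cst c) = {c}"
| "trm_consts (Mul t s) = trm_consts t \<union> trm_consts s"
| "trm_consts (Inv t) = trm_consts t"

text \<open>An L_S-term in the variables X = (x_0, ..., x_{n-1}).\<close>
definition is_term :: "('l \<times> 'g \<times> 'i) set \<Rightarrow> nat \<Rightarrow> ('l \<times> 'g \<times> 'i) trm \<Rightarrow> bool" where
  "is_term S n t \<longleftrightarrow> trm_vars t \<subseteq> {..<n} \<and> trm_consts t \<subseteq> S"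

fun teval :: "('g,'b) monoid_scheme \<Rightarrow> ('i \<Rightarrow> 'l \<Rightarrow> 'g) \<Rightarrow> ('l \<times> 'g \<times> 'i) list
    \<Rightarrow> ('l \<times> 'g \<times> 'i) trm \<Rightarrow> ('l \<times> 'g \<times> 'i)" where
  "teval G P xs (Var k) = xs ! k"
| "teval G P xs (Cst c) = c"
| "teval G P xs (Mul t s) = rees_mult G P (teval G P xs t) (teval G P xs s)"
| "teval G P xs (Inv t) = rees_inv G P (teval G P xs t)"

definition points :: "('g,'b) monoid_scheme \<Rightarrow> 'l set \<Rightarrow> 'i set \<Rightarrow> nat \<Rightarrow> ('l \<times> 'g \<times> 'i) list set" where
  "points G Lam I n = {xs. length xs = n \<and> set xs \<subseteq> rees_carrier G Lam I}"

definition solset :: "('g,'b) monoid_scheme \<Rightarrow> ('i \<Rightarrow> 'l \<Rightarrow> 'g) \<Rightarrow> 'l set \<Rightarrow> 'i set \<Rightarrow> nat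
    \<Rightarrow> (('l \<times> 'g \<times> 'i) trm \<times> ('l \<times> 'g \<times> 'i) trm) set \<Rightarrow> ('l \<times> 'g \<times> 'i) list set" where
  "solset G P Lam I n E = {xs \<in> points G Lam I n. \<forall>(t, s) \<in> E. teval G P xs t = teval G P xs s}"

definition algebraic_set :: "('g,'b) monoid_scheme \<Rightarrow> ('i \<Rightarrow> 'l \<Rightarrow> 'g) \<Rightarrow> 'l set \<Rightarrow> 'i set \<Rightarrow> nat
    \<Rightarrow> ('l \<times> 'g \<times> 'i) list set \<Rightarrow> bool" where
  "algebraic_set G P Lam I n Y \<longleftrightarrow>
     (\<exists>E. (\<forall>(t, s) \<in> E. is_term (rees_carrier G Lam I) n t \<and> is_term (rees_carrier G Lam I) n s)
          \<and> Y = solset G P Lam I n E)"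

end

theory Submission
  imports Defs
begin

(* For k in I and m in Lam, the sandwich map  x |-> (l1,1,k) x (m,1,i1)  sends
   (l,g,i) to (l1, p_kl g p_im, i1), an element of the maximal subgroup H of S at 1.
   Normalisation of P (trivial first row and column) and non-singularity (distinct rows,
   distinct columns) together show that the family of all sandwich maps separates the
   points of S.  Inside the group H an equation a = b is equivalent to a b^-1 = 1.
   Hence a single equation t = s is equivalent to the system
     (l1,1,k) t (m,1,i1) ((l1,1,k) s (m,1,i1))^-1 = 1     (k in I, m in Lam). *)

lemma rees_mult_simp [simp]:
  "rees_mult G P (l, g, i) (m, h, j) = (l, g \<otimes>\<^bsub>G\<^esub> P i m \<otimes>\<^bsub>G\<^esub> h, j)"
  by (simp add: rees_mult_def)

lemma rees_inv_simp [simp]: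
  "rees_inv G P (l, g, i) =
     (l, inv\<^bsub>G\<^esub> (P i l) \<otimes>\<^bsub>G\<^esub> inv\<^bsub>G\<^esub> g \<otimes>\<^bsub>G\<^esub> inv\<^bsub>G\<^esub> (P i l), i)"
  by (simp add: rees_inv_def)

locale rees_semigroup = group G for G (structure) +
  fixes P :: "'i \<Rightarrow> 'l \<Rightarrow> 'g" and Lam :: "'l set" and I :: "'i set" and l1 :: 'l and i1 :: 'i
  assumes l1_in: "l1 \<in> Lam" and i1_in: "i1 \<in> I"
    and P_closed: "\<And>i l. i \<in> I \<Longrightarrow> l \<in> Lam \<Longrightarrow> P i l \<in> carrier G"
    and P_first_row: "\<And>l. l \<in> Lam \<Longrightarrow> P i1 l = \<one>"
    and P_first_col: "\<And>i. i \<in> I \<Longrightarrow> P i l1 = \<one>"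

lemma rees_data_imp_rees_semigroup:
  "rees_data G P Lam I l1 i1 \<Longrightarrow> rees_semigroup G P Lam I l1 i1"
  by (simp add: rees_data_def rees_semigroup_def rees_semigroup_axioms_def)

context rees_semigroup
begin

abbreviation S :: "('l \<times> 'g \<times> 'i) set" where
  "S \<equiv> rees_carrier G Lam I"

abbreviation one_S :: "'l \<times> 'g \<times> 'i" where
  "one_S \<equiv> (l1, \<one>, i1)"

lemma mult_closed: "x \<in> S \<Longrightarrow> y \<in> S \<Longrightarrow> rees_mult G P x y \<in> S"
  by (auto simp: rees_carrier_def P_closed)

lemma inv_closed_S: "x \<in> S \<Longrightarrow> rees_inv G P x \<in> S"
  by (auto simp: rees_carrier_def P_closed)

lemma teval_closed:
  assumes "is_term S n t" and "xs \<in> points G Lam I n"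
  shows "teval G P xs t \<in> S"
  using assms
  by (induction t) (auto simp: is_term_def points_def mult_closed inv_closed_S)

definition sandwich :: "'i \<Rightarrow> 'l \<Rightarrow> 'l \<times> 'g \<times> 'i \<Rightarrow> 'l \<times> 'g \<times> 'i" where
  "sandwich k m x = rees_mult G P (rees_mult G P (l1, \<one>, k) x) (m, \<one>, i1)"

lemma sandwich_val:
  assumes "k \<in> I" "m \<in> Lam" "l \<in> Lam" "g \<in> carrier G" "i \<in> I"
  shows "sandwich k m (l, g, i) = (l1, P k l \<otimes> g \<otimes> P i m, i1)"
  using assms by (simp add: sandwich_def P_closed)

(* Non-singularity makes the sandwich maps jointly injective on S:
   (i1,l1) recovers g, (k,l1) recovers row k of P at l, (i1,m) recovers column m at i. *)
lemma sandwich_separates: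
  assumes ns: "nonsingular P Lam I" and "x \<in> S" "y \<in> S"
    and same: "\<And>k m. k \<in> I \<Longrightarrow> m \<in> Lam \<Longrightarrow> sandwich k m x = sandwich k m y"
  shows "x = y"
proof -
  obtain l g i where x: "x = (l, g, i)" and l: "l \<in> Lam" and g: "g \<in> carrier G" and i: "i \<in> I"
    using \<open>x \<in> S\<close> by (auto simp: rees_carrier_def)
  obtain l' g' i' where y: "y = (l', g', i')"
    and l': "l' \<in> Lam" and g': "g' \<in> carrier G" and i': "i' \<in> I"
    using \<open>y \<in> S\<close> by (auto simp: rees_carrier_def)
  have entry: "P k l \<otimes> g \<otimes> P i m = P k l' \<otimes> g' \<otimes> P i' m" if "k \<in> I" "m \<in> Lam" for k m
    using same[OF that] sandwich_val[OF that l g i] sandwich_val[OF that l' g' i'] x y by simp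
  have "g = g'"
    using entry[OF i1_in l1_in] l i l' i' g g' by (simp add: P_first_row P_first_col)
  have rows: "P k l = P k l'" if k: "k \<in> I" for k
    using entry[OF k l1_in] \<open>g = g'\<close> g i i' P_closed[OF k l] P_closed[OF k l']
    by (simp add: P_first_col)
  have cols: "P i m = P i' m" if m: "m \<in> Lam" for m
    using entry[OF i1_in m] \<open>g = g'\<close> g l l' P_closed[OF i m] P_closed[OF i' m]
    by (simp add: P_first_row)
  have "l = l'" using ns rows l l' unfolding nonsingular_def by blast
  moreover have "i = i'" using ns cols i i' unfolding nonsingular_def by blast
  ultimately show "x = y" using x y \<open>g = g'\<close> by simp
qed

lemma sandwich_in_H:
  assumes "k \<in> I" "m \<in> Lam" "x \<in> S"
  obtains a where "sandwich k m x = (l1, a, i1)" and "a \<in> carrier G"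
  using assms sandwich_val P_closed by (force simp: rees_carrier_def)

lemma H_quotient_eq_one:
  assumes "a \<in> carrier G" "b \<in> carrier G"
  shows "rees_mult G P (l1, a, i1) (rees_inv G P (l1, b, i1)) = one_S \<longleftrightarrow> a = b"
proof -
  have "rees_mult G P (l1, a, i1) (rees_inv G P (l1, b, i1)) = (l1, a \<otimes> inv b, i1)"
    using assms by (simp add: P_first_row[OF l1_in])
  moreover have "a \<otimes> inv b = \<one> \<longleftrightarrow> a = b"
    using assms right_cancel[of "inv b" a b] by simp
  ultimately show ?thesis by simp
qed

lemma eq_iff_sandwich_quotients:
  assumes ns: "nonsingular P Lam I" and "x \<in> S" "y \<in> S"
  shows "x = y \<longleftrightarrow> (\<forall>k\<in>I. \<forall>m\<in>Lam.
           rees_mult G P (sandwich k m x) (rees_inv G P (sandwich k m y)) = one_S)"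
proof -
  have "rees_mult G P (sandwich k m x) (rees_inv G P (sandwich k m y)) = one_S
          \<longleftrightarrow> sandwich k m x = sandwich k m y" if km: "k \<in> I" "m \<in> Lam" for k m
  proof -
    obtain a b where "sandwich k m x = (l1, a, i1)" "sandwich k m y = (l1, b, i1)"
      and "a \<in> carrier G" "b \<in> carrier G"
      using sandwich_in_H[OF km \<open>x \<in> S\<close>] sandwich_in_H[OF km \<open>y \<in> S\<close>] by metis
    then show ?thesis
      using H_quotient_eq_one[of a b] by (simp del: rees_mult_simp rees_inv_simp)
  qed
  then show ?thesis using sandwich_separates[OF assms] by auto
qed

definition sandwich_trm :: "'i \<Rightarrow> 'l \<Rightarrow> ('l \<times> 'g \<times> 'i) trm \<Rightarrow> ('l \<times> 'g \<times> 'i) trm" where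
  "sandwich_trm k m t = Mul (Mul (Cst (l1, \<one>, k)) t) (Cst (m, \<one>, i1))"

definition quotient_trm :: "'i \<Rightarrow> 'l \<Rightarrow> ('l \<times> 'g \<times> 'i) trm \<Rightarrow> ('l \<times> 'g \<times> 'i) trm
    \<Rightarrow> ('l \<times> 'g \<times> 'i) trm" where
  "quotient_trm k m t s = Mul (sandwich_trm k m t) (Inv (sandwich_trm k m s))"

lemma teval_quotient_trm:
  "teval G P xs (quotient_trm k m t s)
     = rees_mult G P (sandwich k m (teval G P xs t)) (rees_inv G P (sandwich k m (teval G P xs s)))"
  by (simp add: quotient_trm_def sandwich_trm_def sandwich_def)

lemma is_term_quotient_trm:
  assumes "is_term S n t" "is_term S n s" "k \<in> I" "m \<in> Lam"
  shows "is_term S n (quotient_trm k m t s)"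
  using assms l1_in i1_in
  by (auto simp: is_term_def quotient_trm_def sandwich_trm_def rees_carrier_def)

definition one_system :: "(('l \<times> 'g \<times> 'i) trm \<times> ('l \<times> 'g \<times> 'i) trm) set
    \<Rightarrow> ('l \<times> 'g \<times> 'i) trm set" where
  "one_system E = {quotient_trm k m t s | k m t s. k \<in> I \<and> m \<in> Lam \<and> (t, s) \<in> E}"

lemma one_system_terms:
  assumes "\<forall>(t, s) \<in> E. is_term S n t \<and> is_term S n s"
  shows "\<forall>u \<in> one_system E. is_term S n u"
  using assms is_term_quotient_trm by (fastforce simp: one_system_def)

lemma solset_one_system:
  assumes ns: "nonsingular P Lam I" and E: "\<forall>(t, s) \<in> E. is_term S n t \<and> is_term S n s"
  shows "solset G P Lam I n E = solset G P Lam I n {(u, Cst one_S) | u. u \<in> one_system E}"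
proof -
  have "(\<forall>(t, s) \<in> E. teval G P xs t = teval G P xs s)
          \<longleftrightarrow> (\<forall>u \<in> one_system E. teval G P xs u = one_S)"
    if xs: "xs \<in> points G Lam I n" for xs
  proof -
    have "teval G P xs t = teval G P xs s
            \<longleftrightarrow> (\<forall>k\<in>I. \<forall>m\<in>Lam. teval G P xs (quotient_trm k m t s) = one_S)"
      if "(t, s) \<in> E" for t s
      using eq_iff_sandwich_quotients[OF ns teval_closed teval_closed] E that xs
      by (auto simp: teval_quotient_trm)
    then show ?thesis by (fastforce simp: one_system_def)
  qed
  then show ?thesis by (auto simp: solset_def)
qed

end

theorem mainTheorem10:
  fixes G :: "('g, 'b) monoid_scheme" and P :: "'i \<Rightarrow> 'l \<Rightarrow> 'g"
    and Lam :: "'l set" and I :: "'i set" and l1 :: 'l and i1 :: 'i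
    and n :: nat and Y :: "('l \<times> 'g \<times> 'i) list set"
  assumes "rees_data G P Lam I l1 i1"
    and "nonsingular P Lam I"
    and "algebraic_set G P Lam I n Y"
  shows "\<exists>T. (\<forall>t \<in> T. is_term (rees_carrier G Lam I) n t)
            \<and> Y = solset G P Lam I n {(t, Cst (l1, \<one>\<^bsub>G\<^esub>, i1)) | t. t \<in> T}"
proof -
  interpret rees_semigroup G P Lam I l1 i1
    using assms(1) by (rule rees_data_imp_rees_semigroup)
  obtain E where E: "\<forall>(t, s) \<in> E. is_term S n t \<and> is_term S n s"
    and Y: "Y = solset G P Lam I n E"
    using assms(3) unfolding algebraic_set_def by blast
  show ?thesis
    using one_system_terms[OF E] solset_one_system[OF assms(2) E] Y by blast
qed

end
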